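(* Let $q>0$, $\mu>0$, and let $\varphi_n^{(0)}\in(-\pi/2,\pi/2)$ be a real solution of $q\sin\varphi_n^{(0)}=n\pi-\varphi_n^{(0)}$ for some integer $n$. Then there is a unique analytic function $\lambda\mapsto\varphi_n(\lambda)$, defined for $\lambda$ in a neighborhood of $0$, with $\varphi_n(0)=\varphi_n^{(0)}$ and $F(\lambda,\varphi_n(\lambda))=0$, and with $q_n:=2q+2/\cos\varphi_n^{(0)}$ it satisfies $$\varphi_n(\lambda)=\varphi_n^{(0)}-\frac{\tan\varphi_n^{(0)}}{q_n}\lambda+\tan\varphi_n^{(0)}\Bigl(\frac{1}{q_n^2}+\frac{q}{q_n^3}\tan^2\varphi_n^{(0)}+\frac{i}{2}\frac{\sin\varphi_n^{(0)}}{q_n}\Bigr)\lambda^2+O(\lambda^3).$$ Consequently $s_n(\lambda):=i\mu\sin\varphi_n(\lambda)$ satisfies, with $\omega_n^{(0)}:=\mu\sin\varphi_n^{(0)}$ and $\sigma_n:=1-q_n^{-1}\sin^2\varphi_n^{(0)}/\cos^3\varphi_n^{(0)}$, $$s_n(\lambda)=i\omega_n^{(0)}\Bigl[1-\frac{\lambda}{q_n}+\frac{\sigma_n}{q_n^2}\lambda^2+\frac{i}{2}\frac{\sin\varphi_n^{(0)}}{q_n}\lambda^2+O(\lambda^3)\Bigr];$$ in particular $\mathrm{Re}\,s_n(\lambda)=-\frac{\mu\sin^2\varphi_n^{(0)}}{2q_n}\lambda^2+O(\lambda^3)$.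
   Context: $Q=\{\varphi\in\mathbb{C}:-\pi/2<\mathrm{Re}\,\varphi<\pi/2\}$ and $F(\lambda,\varphi):=1+i\lambda\sin\varphi-e^{-2i\varphi-2qi\sin\varphi}$ for $\lambda\ge 0$ (here $\lambda=2\mu/A$ and $q=a\mu$ for the toy potential $A\delta(x)+\mu^2\theta(x-a)$). *)

theory Defs
  imports "HOL-Analysis.Analysis" "HOL-Library.Landau_Symbols"
begin

definition stripQ :: "complex set" where
  "stripQ = {z. - (pi/2) < Re z \<and> Re z < pi/2}"

definition F :: "real \<Rightarrow> complex \<Rightarrow> complex \<Rightarrow> complex" where
  "F q l z = 1 + \<i> * l * sin z - exp (- 2 * \<i> * z - 2 * of_real q * \<i> * sin z)"

end

theory Submission
  imports Defs "HOL-Complex_Analysis.Complex_Analysis"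
begin

(* The equation F(lambda, phi) = 0 can be written as lambda * B(phi) = A(phi) with
   A(z) = exp(-2 i z - 2 q i sin z) - 1 and B(z) = i sin z.  The quantisation condition
   q sin phi0 = n pi - phi0 says exactly that phi0 is a zero of A, and it is simple because
   A'(phi0) = -2 i (1 + q cos phi0) with cos phi0 > 0.

   Together with a
   big-O Taylor formula for holomorphic functions this gives the expansion of phi_n; the
   expansion of s_n = i mu sin phi_n follows by the chain rule, and that of Re s_n by
   restriction to the real axis. *)

text \<open>This follows from the Lagrange-type
  bound complex_Taylor on a smaller closed disc.\<close>
lemma holomorphic_Taylor_bigo:
  fixes f :: "complex \<Rightarrow> complex"
  assumes hol: "f holomorphic_on ball z r" and r: "r > 0"
  shows "(\<lambda>w. f w - (\<Sum>i\<le>n. (deriv ^^ i) f z * (w - z) ^ i / fact i))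
           \<in> O[at z](\<lambda>w. (w - z) ^ Suc n)"
proof -
  define S where "S = cball z (r / 2)"
  have S_sub: "S \<subseteq> ball z r"
    using r by (auto simp: S_def)
  have der: "((deriv ^^ i) f has_field_derivative (deriv ^^ Suc i) f w) (at w within S)"
    if "w \<in> S" for i w
    using has_field_derivative_higher_deriv[OF hol open_ball] S_sub that
    by (blast intro: has_field_derivative_at_within)
  have "continuous_on S ((deriv ^^ Suc n) f)"
    using holomorphic_higher_deriv[OF hol open_ball] S_sub
    by (meson holomorphic_on_imp_continuous_on continuous_on_subset)
  then have "bounded ((deriv ^^ Suc n) f ` S)"
    by (intro compact_imp_bounded compact_continuous_image) (simp_all add: S_def)
  then obtain B where B: "\<And>w. w \<in> S \<Longrightarrow> norm ((deriv ^^ Suc n) f w) \<le> B"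
    by (auto simp: bounded_iff)
  have "\<forall>\<^sub>F w in at z. w \<in> S"
    using r unfolding S_def eventually_at by (intro exI[of _ "r / 2"]) (auto simp: dist_commute)
  then have "\<forall>\<^sub>F w in at z. norm (f w - (\<Sum>i\<le>n. (deriv ^^ i) f z * (w - z) ^ i / fact i))
               \<le> B / fact n * norm ((w - z) ^ Suc n)"
  proof eventually_elim
    case (elim w)
    have "z \<in> S" using r by (simp add: S_def)
    from complex_Taylor[OF convex_cball[of z "r/2", folded S_def] der B this elim]
    show ?case by (simp add: norm_mult norm_power)
  qed
  then show ?thesis by (rule bigoI)
qed

corollary holomorphic_Taylor2_bigo:
  fixes f :: "complex \<Rightarrow> complex"
  assumes "f holomorphic_on ball 0 r" "r > 0"
  shows "(\<lambda>l. f l - (f 0 + deriv f 0 * l + deriv (deriv f) 0 / 2 * l ^ 2)) \<in> O[at 0](\<lambda>l. l ^ 3)"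
  using holomorphic_Taylor_bigo[OF assms, of 2]
  by (simp add: numeral_2_eq_2 numeral_3_eq_3 algebra_simps)

lemma deriv2_eqI:
  fixes f f1 :: "complex \<Rightarrow> complex"
  assumes S: "open S" "x \<in> S"
    and f1: "\<And>y. y \<in> S \<Longrightarrow> (f has_field_derivative f1 y) (at y)"
    and f2: "(f1 has_field_derivative f2) (at x)"
  shows "deriv f x = f1 x" and "deriv (deriv f) x = f2"
proof -
  show "deriv f x = f1 x" using f1[OF S(2)] by (rule DERIV_imp_deriv)
  have "(deriv f has_field_derivative f2) (at x)"
    using f2 S by (rule has_field_derivative_transform_within_open) (simp_all add: DERIV_imp_deriv[OF f1])
  then show "deriv (deriv f) x = f2" by (rule DERIV_imp_deriv)
qed

lemma has_field_derivative_zero_if_constant: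
  fixes f :: "complex \<Rightarrow> complex"
  assumes "open S" "x \<in> S" "\<And>y. y \<in> S \<Longrightarrow> f y = c" "(f has_field_derivative D) (at x)"
  shows "D = 0"
proof -
  have "((\<lambda>_. c) has_field_derivative 0) (at x)" by simp
  then have "(f has_field_derivative 0) (at x)"
    by (rule has_field_derivative_transform_within_open[where S = S]) (use assms in auto)
  then show ?thesis using assms(4) DERIV_unique by blast
qed

lemma isCont_eventually_in_open:
  assumes "isCont f x" "open S" "f x \<in> S"
  shows "\<forall>\<^sub>F y in nhds x. f y \<in> S"
proof -
  have "\<forall>\<^sub>F y in at x. f y \<in> S"
    using assms unfolding isCont_def by (rule topological_tendstoD)
  then show ?thesis
    using assms(3) by (auto simp: eventually_at_filter elim!: eventually_mono)
qed

definition solution_branch ::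
    "complex set \<Rightarrow> (complex \<Rightarrow> complex) \<Rightarrow> (complex \<Rightarrow> complex) \<Rightarrow> complex \<Rightarrow> real
     \<Rightarrow> (complex \<Rightarrow> complex) \<Rightarrow> bool" where
  "solution_branch U A B z0 r g \<longleftrightarrow>
     r > 0 \<and> g holomorphic_on ball 0 r \<and> g 0 = z0 \<and>
     (\<forall>l\<in>ball 0 r. g l \<in> U \<and> l * B (g l) = A (g l)) \<and>
     (\<forall>\<psi>. isCont \<psi> 0 \<and> \<psi> 0 = z0 \<and> (\<forall>\<^sub>F l in nhds 0. l * B (\<psi> l) = A (\<psi> l))
          \<longrightarrow> (\<forall>\<^sub>F l in nhds 0. \<psi> l = g l))"

text \<open>Regular case B z0 \<noteq> 0: near z0 the equation reads l = A z / B z, and the branch is the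
  local inverse of A / B, which exists since (A / B)' (z0) = A'(z0) / B(z0) \<noteq> 0.\<close>
lemma solution_branch_regular:
  fixes A B :: "complex \<Rightarrow> complex"
  assumes U: "open U" "z0 \<in> U" and hol: "A holomorphic_on U" "B holomorphic_on U"
    and A0: "A z0 = 0" and dA: "deriv A z0 \<noteq> 0" and B0: "B z0 \<noteq> 0"
  shows "\<exists>r g. solution_branch U A B z0 r g"
proof -
  define V where "V = U \<inter> B -` (- {0})"
  have V: "open V" "z0 \<in> V" "V \<subseteq> U"
    using U B0 holomorphic_on_imp_continuous_on[OF hol(2)]
    by (auto simp: V_def intro: continuous_open_preimage)
  define H where "H z = A z / B z" for z
  have holH: "H holomorphic_on V"
    unfolding H_def using hol V(3) by (intro holomorphic_intros) (auto simp: V_def)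
  have "(H has_field_derivative (deriv A z0 * B z0 - A z0 * deriv B z0) / (B z0 * B z0)) (at z0)"
    unfolding H_def using hol U B0
    by (intro DERIV_divide holomorphic_derivI[of _ U]) auto
  then have "deriv H z0 = deriv A z0 / B z0"
    using B0 A0 by (simp add: DERIV_imp_deriv)
  with dA B0 have dH: "deriv H z0 \<noteq> 0" by simp
  obtain r0 where r0: "r0 > 0" "ball z0 r0 \<subseteq> V" "open (H ` ball z0 r0)" "inj_on H (ball z0 r0)"
    using has_complex_derivative_locally_invertible[OF holH V(2) V(1) dH] by blast
  have holH_ball: "H holomorphic_on ball z0 r0" using holH r0(2) holomorphic_on_subset by blast
  obtain g where g: "g holomorphic_on H ` ball z0 r0" "\<And>z. z \<in> ball z0 r0 \<Longrightarrow> g (H z) = z"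
    using holomorphic_has_inverse[OF holH_ball _ r0(4)] by blast
  have H0: "H z0 = 0" using A0 by (simp add: H_def)
  then obtain \<rho> where \<rho>: "\<rho> > 0" "ball 0 \<rho> \<subseteq> H ` ball z0 r0"
    using r0(1,3) openE by (metis centre_in_ball imageI)
  have equation_iff: "l * B z = A z \<longleftrightarrow> l = H z" if "z \<in> V" for l z
    using that by (auto simp: V_def H_def field_simps)
  have g0: "g 0 = z0" using g(2)[of z0] H0 r0(1) by simp
  have sol: "g l \<in> ball z0 r0 \<and> l * B (g l) = A (g l)" if l: "l \<in> ball 0 \<rho>" for l
  proof -
    obtain z where z: "z \<in> ball z0 r0" "l = H z" using \<rho>(2) l by blast
    then show ?thesis using g(2) r0(2) equation_iff by auto
  qed
  have unique: "\<forall>\<^sub>F l in nhds 0. \<psi> l = g l"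
    if \<psi>: "isCont \<psi> 0" "\<psi> 0 = z0" and eq: "\<forall>\<^sub>F l in nhds 0. l * B (\<psi> l) = A (\<psi> l)" for \<psi>
  proof -
    have "\<forall>\<^sub>F l in nhds 0. \<psi> l \<in> ball z0 r0"
      using \<psi> r0(1) by (intro isCont_eventually_in_open) auto
    with eq show ?thesis
    proof eventually_elim
      case (elim l)
      then have "l = H (\<psi> l)" using r0(2) equation_iff by blast
      then show ?case using g(2) elim by metis
    qed
  qed
  have "g holomorphic_on ball 0 \<rho>" using g(1) \<rho>(2) by (rule holomorphic_on_subset)
  moreover have "\<forall>l\<in>ball 0 \<rho>. g l \<in> U \<and> l * B (g l) = A (g l)"
    using sol r0(2) V(3) by blast
  ultimately have "solution_branch U A B z0 \<rho> g"
    unfolding solution_branch_def using \<rho>(1) g0 unique by blast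
  then show ?thesis by blast
qed

text \<open>Writing A z = (z - z0) K z and
  B z = (z - z0) S z, the equation becomes (z - z0) (l S z - K z) = 0, and the second factor
  tends to -K z0 = -A'(z0) \<noteq> 0, so z0 is the only solution near l = 0.\<close>
lemma solution_branch_degenerate:
  fixes A B :: "complex \<Rightarrow> complex"
  assumes U: "open U" "z0 \<in> U" and hol: "A holomorphic_on U" "B holomorphic_on U"
    and A0: "A z0 = 0" and dA: "deriv A z0 \<noteq> 0" and B0: "B z0 = 0"
  shows "solution_branch U A B z0 1 (\<lambda>_. z0)"
proof -
  define K where "K z = (if z = z0 then deriv A z0 else (A z - A z0) / (z - z0))" for z
  define S where "S z = (if z = z0 then deriv B z0 else (B z - B z0) / (z - z0))" for z
  have A_factor: "A z = (z - z0) * K z" and B_factor: "B z = (z - z0) * S z" for z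
    using A0 B0 by (cases "z = z0"; simp add: K_def S_def)+
  have factor: "l * B z - A z = (z - z0) * (l * S z - K z)" for l z
    by (simp add: A_factor B_factor algebra_simps)
  have "K holomorphic_on U" "S holomorphic_on U"
    unfolding K_def S_def using hol U(1) by (auto intro!: pole_lemma_open)
  then have cont: "isCont K z0" "isCont S z0"
    using U by (meson holomorphic_on_imp_continuous_on continuous_on_eq_continuous_at)+
  have unique: "\<forall>\<^sub>F l in nhds 0. \<psi> l = z0"
    if \<psi>: "isCont \<psi> 0" "\<psi> 0 = z0" and eq: "\<forall>\<^sub>F l in nhds 0. l * B (\<psi> l) = A (\<psi> l)" for \<psi>
  proof -
    have "isCont (\<lambda>l. K (\<psi> l)) 0" "isCont (\<lambda>l. S (\<psi> l)) 0"
      using \<psi> cont by (auto intro: isCont_o2)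
    then have "isCont (\<lambda>l. l * S (\<psi> l) - K (\<psi> l)) 0"
      by (intro continuous_intros)
    then have "\<forall>\<^sub>F l in nhds 0. l * S (\<psi> l) - K (\<psi> l) \<in> - {0}"
      using \<psi>(2) dA by (intro isCont_eventually_in_open) (auto simp: K_def)
    with eq show ?thesis
    proof eventually_elim
      case (elim l)
      then have "(\<psi> l - z0) * (l * S (\<psi> l) - K (\<psi> l)) = 0"
        using factor[of l "\<psi> l"] by simp
      with elim show ?case by simp
    qed
  qed
  show ?thesis
    unfolding solution_branch_def using U(2) A0 B0 unique by auto
qed

lemma solution_branch_exists:
  fixes A B :: "complex \<Rightarrow> complex"
  assumes "open U" "z0 \<in> U" "A holomorphic_on U" "B holomorphic_on U"
    and "A z0 = 0" "deriv A z0 \<noteq> 0"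
  shows "\<exists>r g. solution_branch U A B z0 r g"
  using solution_branch_regular[OF assms] solution_branch_degenerate[OF assms] by blast

lemma solution_branch_unique_analytic:
  assumes branch: "solution_branch U A B z0 r g"
    and \<psi>: "\<psi> analytic_on ball 0 r'" "r' > 0" "\<psi> 0 = z0"
    and eq: "\<forall>l\<in>ball 0 r'. l * B (\<psi> l) = A (\<psi> l)"
  shows "\<forall>\<^sub>F l in nhds 0. \<psi> l = g l"
proof -
  have "\<forall>\<^sub>F l in nhds 0. l \<in> ball 0 r'"
    using \<psi>(2) by (intro eventually_nhds_in_open) auto
  then have "\<forall>\<^sub>F l in nhds 0. l * B (\<psi> l) = A (\<psi> l)"
    using eq by (auto elim: eventually_mono)
  moreover have "isCont \<psi> 0"
    using \<psi> by (meson analytic_at_imp_isCont analytic_on_subset centre_in_ball empty_subsetI insert_subset)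
  ultimately show ?thesis
    using branch \<psi>(3) by (auto simp: solution_branch_def)
qed

text \<open>Implicit differentiation: differentiating l * B (g l) = A (g l) once and twice at l = 0
  determines g'(0) and g''(0) in terms of the derivatives of A and B at g 0.\<close>
lemma solution_branch_derivs:
  fixes g A A1 A2 B B1 B2 :: "complex \<Rightarrow> complex"
  assumes hol: "g holomorphic_on ball 0 r" and r: "r > 0"
    and sol: "\<And>l. l \<in> ball 0 r \<Longrightarrow> g l \<in> U \<and> l * B (g l) = A (g l)"
    and A1: "\<And>z. z \<in> U \<Longrightarrow> (A has_field_derivative A1 z) (at z)"
    and A2: "\<And>z. z \<in> U \<Longrightarrow> (A1 has_field_derivative A2 z) (at z)"
    and B1: "\<And>z. z \<in> U \<Longrightarrow> (B has_field_derivative B1 z) (at z)"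
    and B2: "\<And>z. z \<in> U \<Longrightarrow> (B1 has_field_derivative B2 z) (at z)"
  shows "B (g 0) = A1 (g 0) * deriv g 0"
    and "2 * B1 (g 0) * deriv g 0 = A2 (g 0) * deriv g 0 ^ 2 + A1 (g 0) * deriv (deriv g) 0"
proof -
  define g1 where "g1 = deriv g"
  define g2 where "g2 = deriv g1"
  have G1: "(g has_field_derivative g1 l) (at l)" if "l \<in> ball 0 r" for l
    unfolding g1_def using hol that by (intro holomorphic_derivI) auto
  have G2: "(g1 has_field_derivative g2 l) (at l)" if "l \<in> ball 0 r" for l
    unfolding g2_def g1_def using hol that by (intro holomorphic_derivI holomorphic_deriv) auto
  note chain = DERIV_chain2[OF A1 G1] DERIV_chain2[OF A2 G1] DERIV_chain2[OF B1 G1] DERIV_chain2[OF B2 G1]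
  define E1 where "E1 l = B (g l) + l * (B1 (g l) * g1 l) - A1 (g l) * g1 l" for l
  have E1_zero: "E1 l = 0" if l: "l \<in> ball 0 r" for l
  proof (rule has_field_derivative_zero_if_constant[OF open_ball l])
    show "((\<lambda>l. l * B (g l) - A (g l)) has_field_derivative E1 l) (at l)"
      unfolding E1_def using l sol
      by (auto intro!: derivative_eq_intros chain)
  qed (use sol in auto)
  have "B1 (g 0) * g1 0 + B1 (g 0) * g1 0 - (A2 (g 0) * g1 0 * g1 0 + A1 (g 0) * g2 0) = 0"
  proof (rule has_field_derivative_zero_if_constant[where S = "ball 0 r" and c = 0])
    show "(E1 has_field_derivative
        B1 (g 0) * g1 0 + B1 (g 0) * g1 0 - (A2 (g 0) * g1 0 * g1 0 + A1 (g 0) * g2 0)) (at 0)"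
      unfolding E1_def using r sol[of 0]
      by (auto intro!: derivative_eq_intros chain G1 G2)
  qed (use r E1_zero in auto)
  moreover have "E1 0 = 0" using E1_zero r by simp
  ultimately show "B (g 0) = A1 (g 0) * deriv g 0"
    and "2 * B1 (g 0) * deriv g 0 = A2 (g 0) * deriv g 0 ^ 2 + A1 (g 0) * deriv (deriv g) 0"
    by (simp_all add: E1_def g1_def g2_def power2_eq_square algebra_simps)
qed

text \<open>The exponential term of F.  Then F q l z = 0 is the equation l * (i sin z) = F_exp q z - 1,
  an instance of the abstract equation with A = F_exp q - 1 and B = i sin.\<close>
definition F_exp :: "real \<Rightarrow> complex \<Rightarrow> complex" where
  "F_exp q z = exp (- 2 * \<i> * z - 2 * of_real q * \<i> * sin z)"

lemma F_eq_0_iff: "F q l z = 0 \<longleftrightarrow> l * (\<i> * sin z) = F_exp q z - 1"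
  by (auto simp: F_def F_exp_def algebra_simps)

lemma F_exp_deriv:
  "((\<lambda>z. F_exp q z - 1) has_field_derivative F_exp q z * (- 2 * \<i> - 2 * of_real q * \<i> * cos z)) (at z)"
  unfolding F_exp_def by (auto intro!: derivative_eq_intros)

lemma F_exp_deriv2:
  "((\<lambda>z. F_exp q z * (- 2 * \<i> - 2 * of_real q * \<i> * cos z)) has_field_derivative
     F_exp q z * ((- 2 * \<i> - 2 * of_real q * \<i> * cos z) ^ 2 + 2 * of_real q * \<i> * sin z)) (at z)"
  unfolding F_exp_def by (auto intro!: derivative_eq_intros simp: power2_eq_square algebra_simps)

text \<open>The quantisation condition makes the phase a multiple of 2 pi i, so phi0 is a zero of A.\<close>
lemma F_exp_root:
  fixes q \<phi>0 :: real and n :: int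
  assumes "q * sin \<phi>0 = of_int n * pi - \<phi>0"
  shows "F_exp q (of_real \<phi>0) = 1"
proof -
  have "\<phi>0 + q * sin \<phi>0 = of_int n * pi" using assms by simp
  then have root: "of_real \<phi>0 + of_real q * sin (of_real \<phi>0) = (of_int n * pi :: complex)"
    by (simp add: sin_of_real flip: of_real_mult of_real_add)
  have "- 2 * \<i> * of_real \<phi>0 - 2 * of_real q * \<i> * sin (of_real \<phi>0)
             = - 2 * \<i> * (of_real \<phi>0 + of_real q * sin (of_real \<phi>0))"
    by (simp add: algebra_simps)
  also have "\<dots> = - 2 * \<i> * (of_int n * pi)" by (simp only: root)
  also have "\<dots> = 2 * of_int (- n) * pi * \<i>" by simp
  finally have "F_exp q (of_real \<phi>0) = exp (2 * of_int (- n) * pi * \<i>)"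
    by (simp only: F_exp_def)
  then show ?thesis by (simp only: exp_integer_2pi Ints_of_int)
qed

text \<open>Solving the two linear equations from implicit differentiation at phi0, with s = sin phi0,
  c = cos phi0 and k = 1 + q c (so that A'(phi0) = -2 i k).\<close>
lemma branch_coefficients_solve:
  fixes a b :: complex and s c q k :: real
  assumes k: "k \<noteq> 0"
    and eq1: "\<i> * of_real s = - 2 * \<i> * of_real k * a"
    and eq2: "2 * (\<i> * of_real c) * a = (2 * \<i> * of_real (q * s) - 4 * of_real k ^ 2) * a ^ 2
                                     - 2 * \<i> * of_real k * b"
  shows "a = of_real (- s / (2 * k))"
    and "b = of_real (c * s / (2 * k ^ 2) + q * s ^ 3 / (4 * k ^ 3)) + \<i> * of_real (s ^ 2 / (2 * k))"
proof -
  show a: "a = of_real (- s / (2 * k))"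
    using eq1 k by (auto simp: complex_eq_iff field_simps)
  have "2 * \<i> * of_real k * b = (2 * \<i> * of_real (q * s) - 4 * of_real k ^ 2) * a ^ 2 - 2 * (\<i> * of_real c) * a"
    using eq2 by (simp add: algebra_simps)
  then show "b = of_real (c * s / (2 * k ^ 2) + q * s ^ 3 / (4 * k ^ 3)) + \<i> * of_real (s ^ 2 / (2 * k))"
    using k unfolding a by (simp add: field_simps power2_eq_square power3_eq_cube complex_eq_iff)
qed

lemma open_stripQ: "open stripQ"
proof -
  have "stripQ = {z. Re z > - (pi / 2)} \<inter> {z. Re z < pi / 2}"
    by (auto simp: stripQ_def)
  moreover have "open ({z. Re z > - (pi / 2)} \<inter> {z. Re z < pi / 2})"
    by (intro open_Int open_halfspace_Re_gt open_halfspace_Re_lt)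
  ultimately show ?thesis by simp
qed

text \<open>Existence of the solution branch of F through phi0: phi0 is a simple zero of A since
  A'(phi0) = -2 i (1 + q cos phi0) and cos phi0 > 0.\<close>
lemma F_solution_branch:
  fixes q \<phi>0 :: real and n :: int
  assumes q: "q > 0" and \<phi>0: "- (pi / 2) < \<phi>0" "\<phi>0 < pi / 2"
    and root: "q * sin \<phi>0 = of_int n * pi - \<phi>0"
  shows "\<exists>r \<phi>. solution_branch stripQ (\<lambda>z. F_exp q z - 1) (\<lambda>z. \<i> * sin z) (of_real \<phi>0) r \<phi>"
proof (rule solution_branch_exists)
  show "open stripQ" by (rule open_stripQ)
  show "complex_of_real \<phi>0 \<in> stripQ" using \<phi>0 by (simp add: stripQ_def)
  show "(\<lambda>z. F_exp q z - 1) holomorphic_on stripQ" "(\<lambda>z. \<i> * sin z) holomorphic_on stripQ"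
    unfolding F_exp_def by (intro holomorphic_intros)+
  show "F_exp q (of_real \<phi>0) - 1 = 0" using F_exp_root[OF root] by simp
  have "cos \<phi>0 > 0" using \<phi>0 by (intro cos_gt_zero_pi) auto
  then have "1 + q * cos \<phi>0 > 0" using q by (simp add: add_pos_pos)
  then show "deriv (\<lambda>z. F_exp q z - 1) (of_real \<phi>0) \<noteq> 0"
    using DERIV_imp_deriv[OF F_exp_deriv] F_exp_root[OF root]
    by (auto simp: cos_of_real complex_eq_iff)
qed

lemma F_branch_derivs:
  fixes q \<phi>0 r :: real and n :: int and \<phi> :: "complex \<Rightarrow> complex"
  assumes q: "q > 0" and cos_pos: "cos \<phi>0 > 0" and root: "q * sin \<phi>0 = of_int n * pi - \<phi>0"
    and branch: "solution_branch stripQ (\<lambda>z. F_exp q z - 1) (\<lambda>z. \<i> * sin z) (of_real \<phi>0) r \<phi>"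
  defines "qn \<equiv> 2 * q + 2 / cos \<phi>0"
  shows "deriv \<phi> 0 = - of_real (tan \<phi>0 / qn)"
    and "deriv (deriv \<phi>) 0 / 2 = of_real (tan \<phi>0) * (of_real (1 / qn ^ 2 + q / qn ^ 3 * (tan \<phi>0) ^ 2)
                                   + \<i> / 2 * of_real (sin \<phi>0 / qn))"
proof -
  define s c k where "s = sin \<phi>0" and "c = cos \<phi>0" and "k = 1 + q * c"
  have k: "k > 0" using q cos_pos by (simp add: k_def c_def add_pos_pos)
  have qn: "qn = 2 * k / c" and tan: "tan \<phi>0 = s / c"
    using cos_pos by (simp_all add: qn_def k_def c_def s_def tan_def field_simps)
  from branch have hol: "\<phi> holomorphic_on ball 0 r" and r: "r > 0" and p0: "\<phi> 0 = of_real \<phi>0"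
    and sol: "\<And>l. l \<in> ball 0 r \<Longrightarrow> \<phi> l \<in> stripQ \<and> l * (\<i> * sin (\<phi> l)) = F_exp q (\<phi> l) - 1"
    by (auto simp: solution_branch_def)
  have B1: "((\<lambda>z. \<i> * sin z) has_field_derivative \<i> * cos z) (at z)"
    and B2: "((\<lambda>z. \<i> * cos z) has_field_derivative \<i> * - sin z) (at z)" for z
    by (auto intro!: derivative_eq_intros)
  note D = solution_branch_derivs[OF hol r sol F_exp_deriv F_exp_deriv2 B1 B2]
  have W: "- 2 * \<i> - 2 * of_real q * \<i> * cos (of_real \<phi>0) = - 2 * \<i> * of_real k"
    by (simp add: k_def c_def cos_of_real algebra_simps)
  have eq1: "\<i> * of_real s = - 2 * \<i> * of_real k * deriv \<phi> 0"
    using D(1) unfolding p0 F_exp_root[OF root] W by (simp add: s_def sin_of_real)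
  have eq2: "2 * (\<i> * of_real c) * deriv \<phi> 0
      = (2 * \<i> * of_real (q * s) - 4 * of_real k ^ 2) * deriv \<phi> 0 ^ 2 - 2 * \<i> * of_real k * deriv (deriv \<phi>) 0"
    using D(2) unfolding p0 F_exp_root[OF root] W
    by (simp add: s_def c_def sin_of_real cos_of_real power2_eq_square algebra_simps)
  note coeff = branch_coefficients_solve[OF _ eq1 eq2]
  show "deriv \<phi> 0 = - of_real (tan \<phi>0 / qn)"
    using k cos_pos by (simp add: coeff qn tan c_def field_simps)
  show "deriv (deriv \<phi>) 0 / 2 = of_real (tan \<phi>0) * (of_real (1 / qn ^ 2 + q / qn ^ 3 * (tan \<phi>0) ^ 2)
                                   + \<i> / 2 * of_real (sin \<phi>0 / qn))"
    using k cos_pos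
    by (simp add: coeff qn tan complex_eq_iff field_simps power2_eq_square power3_eq_cube flip: c_def s_def)
qed

lemma deriv2_scaled_sin_comp:
  fixes g :: "complex \<Rightarrow> complex" and m :: complex
  assumes hol: "g holomorphic_on ball 0 r" and r: "r > 0"
  shows "deriv (\<lambda>l. m * sin (g l)) 0 = m * cos (g 0) * deriv g 0"
    and "deriv (deriv (\<lambda>l. m * sin (g l))) 0
           = m * (cos (g 0) * deriv (deriv g) 0 - sin (g 0) * deriv g 0 ^ 2)"
proof -
  have G1: "(g has_field_derivative deriv g l) (at l)" if "l \<in> ball 0 r" for l
    using hol that by (intro holomorphic_derivI) auto
  have G2: "(deriv g has_field_derivative deriv (deriv g) 0) (at 0)"
    using hol r by (intro holomorphic_derivI holomorphic_deriv) auto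
  have d1: "((\<lambda>l. m * sin (g l)) has_field_derivative m * cos (g l) * deriv g l) (at l)"
    if "l \<in> ball 0 r" for l
    using G1[OF that] by (auto intro!: derivative_eq_intros)
  have d2: "((\<lambda>l. m * cos (g l) * deriv g l) has_field_derivative
              m * (cos (g 0) * deriv (deriv g) 0 - sin (g 0) * deriv g 0 ^ 2)) (at 0)"
    using G1[of 0] G2 r by (auto intro!: derivative_eq_intros simp: power2_eq_square algebra_simps)
  show "deriv (\<lambda>l. m * sin (g l)) 0 = m * cos (g 0) * deriv g 0"
    and "deriv (deriv (\<lambda>l. m * sin (g l))) 0
           = m * (cos (g 0) * deriv (deriv g) 0 - sin (g 0) * deriv g 0 ^ 2)"
    using deriv2_eqI[OF open_ball _ d1 d2, of 0] r by simp_all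
qed

text \<open>The Taylor coefficients of s_n = i mu sin phi_n, computed from those of phi_n.  The real part
  of the second coefficient simplifies because q - q_n / 2 = -1 / cos phi0.\<close>
lemma sn_coefficients:
  fixes q \<mu> \<phi>0 :: real and a b :: complex
  assumes q: "q > 0" and cos_pos: "cos \<phi>0 > 0"
  defines "qn \<equiv> 2 * q + 2 / cos \<phi>0"
    and "\<omega>0 \<equiv> \<mu> * sin \<phi>0"
    and "\<sigma> \<equiv> 1 - (sin \<phi>0) ^ 2 / ((2 * q + 2 / cos \<phi>0) * (cos \<phi>0) ^ 3)"
  assumes a: "a = - of_real (tan \<phi>0 / qn)"
    and b: "b / 2 = of_real (tan \<phi>0) * (of_real (1 / qn ^ 2 + q / qn ^ 3 * (tan \<phi>0) ^ 2)
                                       + \<i> / 2 * of_real (sin \<phi>0 / qn))"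
  shows "\<i> * of_real \<mu> * cos (of_real \<phi>0) * a = - (\<i> * of_real \<omega>0 / of_real qn)"
    and "\<i> * of_real \<mu> * (cos (of_real \<phi>0) * b - sin (of_real \<phi>0) * a ^ 2) / 2
           = \<i> * of_real \<omega>0 * (of_real (\<sigma> / qn ^ 2) + \<i> / 2 * of_real (sin \<phi>0 / qn))"
proof -
  define s c where "s = sin \<phi>0" and "c = cos \<phi>0"
  have qn_pos: "qn > 0" using q cos_pos by (simp add: qn_def add_pos_pos)
  show "\<i> * of_real \<mu> * cos (of_real \<phi>0) * a = - (\<i> * of_real \<omega>0 / of_real qn)"
    using cos_pos by (simp add: a \<omega>0_def cos_of_real tan_def field_simps)
  have key: "q - qn / 2 = - 1 / c" by (simp add: qn_def c_def field_simps)
  have "c * (s / c) * (1 / qn ^ 2 + q / qn ^ 3 * (s / c) ^ 2) - s * (s / c / qn) ^ 2 / 2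
          = s / qn ^ 2 + s ^ 3 / (c ^ 2 * qn ^ 3) * (q - qn / 2)"
    using cos_pos qn_pos by (simp add: c_def field_simps power2_eq_square power3_eq_cube)
  also have "\<dots> = s * ((1 - s ^ 2 / (qn * c ^ 3)) / qn ^ 2)"
    using cos_pos qn_pos unfolding key by (simp add: c_def field_simps power2_eq_square power3_eq_cube)
  finally have real_part: "c * (s / c) * (1 / qn ^ 2 + q / qn ^ 3 * (s / c) ^ 2) - s * (s / c / qn) ^ 2 / 2
                            = s * ((1 - s ^ 2 / (qn * c ^ 3)) / qn ^ 2)" .
  have tan: "tan \<phi>0 = s / c" by (simp add: s_def c_def tan_def)
  have "b = 2 * (b / 2)" by simp
  also have "\<dots> = 2 * (of_real (s / c) * (of_real (1 / qn ^ 2 + q / qn ^ 3 * (s / c) ^ 2)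
                                       + \<i> / 2 * of_real (s / qn)))"
    by (simp only: b tan s_def)
  finally have b_eq: "b = \<dots>" .
  have "cos (of_real \<phi>0) * b - sin (of_real \<phi>0) * a ^ 2
        = 2 * of_real (c * (s / c) * (1 / qn ^ 2 + q / qn ^ 3 * (s / c) ^ 2) - s * (s / c / qn) ^ 2 / 2)
          + \<i> * of_real (c * (s / c) * (s / qn))"
    unfolding b_eq a tan
    by (simp add: cos_of_real sin_of_real c_def s_def algebra_simps power2_eq_square)
  also have "\<dots> = 2 * of_real (s * (\<sigma> / qn ^ 2)) + \<i> * of_real (s * (s / qn))"
    using cos_pos unfolding real_part by (simp add: \<sigma>_def qn_def c_def s_def)
  finally have second_order:
    "cos (of_real \<phi>0) * b - sin (of_real \<phi>0) * a ^ 2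
       = 2 * of_real (s * (\<sigma> / qn ^ 2)) + \<i> * of_real (s * (s / qn))" .
  show "\<i> * of_real \<mu> * (cos (of_real \<phi>0) * b - sin (of_real \<phi>0) * a ^ 2) / 2
           = \<i> * of_real \<omega>0 * (of_real (\<sigma> / qn ^ 2) + \<i> / 2 * of_real (sin \<phi>0 / qn))"
    unfolding second_order by (simp add: \<omega>0_def s_def field_simps)
qed

lemma bigo_Re_of_real:
  fixes f :: "complex \<Rightarrow> complex"
  assumes "f \<in> O[at 0](\<lambda>l. l ^ n)"
  shows "(\<lambda>x::real. Re (f (of_real x))) \<in> O[at 0](\<lambda>x. x ^ n)"
proof -
  have "filterlim (of_real :: real \<Rightarrow> complex) (at 0) (at 0)"
    by (auto simp: filterlim_at eventually_at_filter intro!: tendsto_eq_intros)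
  with assms have "(\<lambda>x::real. f (of_real x)) \<in> O[at 0](\<lambda>x. (of_real x :: complex) ^ n)"
    by (rule landau_o.big.compose)
  then have "(\<lambda>x::real. norm (f (of_real x))) \<in> O[at 0](\<lambda>x. norm ((of_real x :: complex) ^ n))"
    by (subst landau_o.big.norm_iff)
  then have "(\<lambda>x::real. norm (f (of_real x))) \<in> O[at 0](\<lambda>x. \<bar>x ^ n\<bar>)"
    by (simp only: norm_power norm_of_real flip: power_abs)
  then have norm_bound: "(\<lambda>x::real. norm (f (of_real x))) \<in> O[at 0](\<lambda>x. x ^ n)"
    by (simp only: landau_o.big.abs)
  have "(\<lambda>x::real. Re (f (of_real x))) \<in> O[at 0](\<lambda>x. norm (f (of_real x)))"
    by (intro landau_o.bigI[of 1]) (auto simp: abs_Re_le_cmod)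
  from landau_o.big_trans[OF this norm_bound] show ?thesis .
qed

lemma sn_expansion:
  fixes q \<mu> \<phi>0 r :: real and \<phi> :: "complex \<Rightarrow> complex"
  assumes q: "q > 0" and cos_pos: "cos \<phi>0 > 0"
    and hol: "\<phi> holomorphic_on ball 0 r" and r: "r > 0" and p0: "\<phi> 0 = of_real \<phi>0"
  defines "qn \<equiv> 2 * q + 2 / cos \<phi>0"
    and "\<omega>0 \<equiv> \<mu> * sin \<phi>0"
    and "\<sigma> \<equiv> 1 - (sin \<phi>0) ^ 2 / ((2 * q + 2 / cos \<phi>0) * (cos \<phi>0) ^ 3)"
  assumes a: "deriv \<phi> 0 = - of_real (tan \<phi>0 / qn)"
    and b: "deriv (deriv \<phi>) 0 / 2 = of_real (tan \<phi>0) * (of_real (1 / qn ^ 2 + q / qn ^ 3 * (tan \<phi>0) ^ 2)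
                                                  + \<i> / 2 * of_real (sin \<phi>0 / qn))"
  shows "(\<lambda>l. \<i> * of_real \<mu> * sin (\<phi> l)
           - \<i> * of_real \<omega>0 * (1 - l / of_real qn + of_real (\<sigma> / qn ^ 2) * l ^ 2
                                + \<i> / 2 * of_real (sin \<phi>0 / qn) * l ^ 2)) \<in> O[at 0](\<lambda>l. l ^ 3)"
    and "(\<lambda>x::real. Re (\<i> * of_real \<mu> * sin (\<phi> (of_real x)))
           - (- (\<mu> * (sin \<phi>0) ^ 2 / (2 * qn)) * x ^ 2)) \<in> O[at 0](\<lambda>x. x ^ 3)"
proof -
  note sn = sn_coefficients[OF q cos_pos a[unfolded qn_def] b[unfolded qn_def], of \<mu>,
                            folded \<sigma>_def \<omega>0_def qn_def]
  note h = deriv2_scaled_sin_comp[OF hol r, of "\<i> * of_real \<mu>", unfolded p0]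
  show complex_expansion: "(\<lambda>l. \<i> * of_real \<mu> * sin (\<phi> l)
           - \<i> * of_real \<omega>0 * (1 - l / of_real qn + of_real (\<sigma> / qn ^ 2) * l ^ 2
                                + \<i> / 2 * of_real (sin \<phi>0 / qn) * l ^ 2)) \<in> O[at 0](\<lambda>l. l ^ 3)"
    using holomorphic_Taylor2_bigo[of "\<lambda>l. \<i> * of_real \<mu> * sin (\<phi> l)", OF _ r] hol
    unfolding h mult.assoc[symmetric] sn p0
    by (simp add: \<omega>0_def sin_of_real holomorphic_intros algebra_simps)
  have "(\<lambda>x::real. Re (\<i> * of_real \<mu> * sin (\<phi> (of_real x))
           - \<i> * of_real \<omega>0 * (1 - of_real x / of_real qn + of_real (\<sigma> / qn ^ 2) * (of_real x) ^ 2
                                + \<i> / 2 * of_real (sin \<phi>0 / qn) * (of_real x) ^ 2))) \<in> O[at 0](\<lambda>x. x ^ 3)"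
    by (rule bigo_Re_of_real[OF complex_expansion])
  then show "(\<lambda>x::real. Re (\<i> * of_real \<mu> * sin (\<phi> (of_real x)))
           - (- (\<mu> * (sin \<phi>0) ^ 2 / (2 * qn)) * x ^ 2)) \<in> O[at 0](\<lambda>x. x ^ 3)"
    by (simp add: \<omega>0_def power2_eq_square algebra_simps)
qed

theorem mainTheorem4:
  fixes q \<mu> \<phi>0 :: real and n :: int
  assumes hq: "q > 0" and hmu: "\<mu> > 0"
    and hlow: "- (pi/2) < \<phi>0" and hup: "\<phi>0 < pi/2"
    and hsol: "q * sin \<phi>0 = of_int n * pi - \<phi>0"
  defines "qn \<equiv> 2 * q + 2 / cos \<phi>0"
    and "\<omega>0 \<equiv> \<mu> * sin \<phi>0"
    and "\<sigma> \<equiv> 1 - (sin \<phi>0)^2 / ((2 * q + 2 / cos \<phi>0) * (cos \<phi>0)^3)"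
  shows "\<exists>r>0. \<exists>\<phi> :: complex \<Rightarrow> complex.
     \<phi> analytic_on ball 0 r \<and> \<phi> 0 = of_real \<phi>0 \<and>
     (\<forall>l\<in>ball 0 r. \<phi> l \<in> stripQ \<and> F q l (\<phi> l) = 0) \<and>
     (\<forall>r'>0. \<forall>\<psi> :: complex \<Rightarrow> complex.
        (\<psi> analytic_on ball 0 r' \<and> \<psi> 0 = of_real \<phi>0 \<and>
         (\<forall>l\<in>ball 0 r'. F q l (\<psi> l) = 0))
        \<longrightarrow> (\<forall>\<^sub>F l in nhds 0. \<psi> l = \<phi> l)) \<and>
     (\<lambda>l. \<phi> l - (of_real \<phi>0 - of_real (tan \<phi>0 / qn) * l
         + of_real (tan \<phi>0) * (of_real (1 / qn^2 + q / qn^3 * (tan \<phi>0)^2)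
             + \<i> / 2 * of_real (sin \<phi>0 / qn)) * l^2))
       \<in> O[at 0](\<lambda>l. l^3) \<and>
     (\<lambda>l. \<i> * of_real \<mu> * sin (\<phi> l)
         - \<i> * of_real \<omega>0 * (1 - l / of_real qn + of_real (\<sigma> / qn^2) * l^2
             + \<i> / 2 * of_real (sin \<phi>0 / qn) * l^2))
       \<in> O[at 0](\<lambda>l. l^3) \<and>
     (\<lambda>x::real. Re (\<i> * of_real \<mu> * sin (\<phi> (of_real x)))
         - (- (\<mu> * (sin \<phi>0)^2 / (2 * qn)) * x^2))
       \<in> O[at 0](\<lambda>x. x^3)"
proof -
  have cos_pos: "cos \<phi>0 > 0" using hlow hup by (intro cos_gt_zero_pi) auto
  obtain r \<phi> where branch: "solution_branch stripQ (\<lambda>z. F_exp q z - 1) (\<lambda>z. \<i> * sin z) (of_real \<phi>0) r \<phi>"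
    using F_solution_branch[OF hq hlow hup hsol] by blast
  then have r: "r > 0" and hol: "\<phi> holomorphic_on ball 0 r" and p0: "\<phi> 0 = of_real \<phi>0"
    and sol: "\<forall>l\<in>ball 0 r. \<phi> l \<in> stripQ \<and> F q l (\<phi> l) = 0"
    by (auto simp: solution_branch_def F_eq_0_iff)
  have unique: "\<forall>\<^sub>F l in nhds 0. \<psi> l = \<phi> l"
    if "\<psi> analytic_on ball 0 r' \<and> \<psi> 0 = of_real \<phi>0 \<and> (\<forall>l\<in>ball 0 r'. F q l (\<psi> l) = 0)" "r' > 0"
    for r' \<psi>
    using solution_branch_unique_analytic[OF branch] that unfolding F_eq_0_iff by blast
  note a = F_branch_derivs(1)[OF hq cos_pos hsol branch, folded qn_def]
  note b = F_branch_derivs(2)[OF hq cos_pos hsol branch, folded qn_def]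
  have phi_expansion: "(\<lambda>l. \<phi> l - (of_real \<phi>0 - of_real (tan \<phi>0 / qn) * l
         + of_real (tan \<phi>0) * (of_real (1 / qn^2 + q / qn^3 * (tan \<phi>0)^2)
             + \<i> / 2 * of_real (sin \<phi>0 / qn)) * l^2)) \<in> O[at 0](\<lambda>l. l^3)"
    using holomorphic_Taylor2_bigo[OF hol r] unfolding p0 a b by (simp add: algebra_simps)
  note sn = sn_expansion[OF hq cos_pos hol r p0 a[unfolded qn_def] b[unfolded qn_def], of \<mu>,
                         folded \<sigma>_def \<omega>0_def qn_def]
  have "\<phi> analytic_on ball 0 r" using hol by (simp add: analytic_on_open)
  with r p0 sol unique phi_expansion sn show ?thesis
    by blast
qed

end
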